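(* Let $G$ be a simple plane graph all of whose faces, including the outer face, are triangles, and let $\Delta(G)$ be its maximum degree. Then $\lambda(G)\ge-\Delta(G)/2$. If moreover $G$ is $k$-regular and $\chi(G)=3$, then $\lambda(G)=-k/2$.
   Context: $\lambda(G)$ is the smallest adjacency eigenvalue and $\chi(G)$ the chromatic number. *)

theory Defs
  imports "HOL-Analysis.Analysis"
begin

text \<open>Finite simple graphs on a finite vertex type 'n (vertex set = UNIV),
  given by a symmetric irreflexive adjacency relation.\<close>

definition simple_graph :: "('n::finite \<Rightarrow> 'n \<Rightarrow> bool) \<Rightarrow> bool" where
  "simple_graph E \<longleftrightarrow> (\<forall>u v. E u v \<longrightarrow> E v u) \<and> (\<forall>u. \<not> E u u)"

definition degree :: "('n::finite \<Rightarrow> 'n \<Rightarrow> bool) \<Rightarrow> 'n \<Rightarrow> nat" where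
  "degree E v = card {u. E v u}"

definition max_degree :: "('n::finite \<Rightarrow> 'n \<Rightarrow> bool) \<Rightarrow> nat" where
  "max_degree E = Max (range (degree E))"

definition regular :: "('n::finite \<Rightarrow> 'n \<Rightarrow> bool) \<Rightarrow> nat \<Rightarrow> bool" where
  "regular E k \<longleftrightarrow> (\<forall>v. degree E v = k)"

definition proper_colouring :: "('n::finite \<Rightarrow> 'n \<Rightarrow> bool) \<Rightarrow> nat \<Rightarrow> ('n \<Rightarrow> nat) \<Rightarrow> bool" where
  "proper_colouring E k c \<longleftrightarrow> (\<forall>v. c v < k) \<and> (\<forall>u v. E u v \<longrightarrow> c u \<noteq> c v)"

definition chromatic_number :: "('n::finite \<Rightarrow> 'n \<Rightarrow> bool) \<Rightarrow> nat" where
  "chromatic_number E = (LEAST k. \<exists>c. proper_colouring E k c)"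

definition adj_matrix :: "('n::finite \<Rightarrow> 'n \<Rightarrow> bool) \<Rightarrow> real^'n^'n" where
  "adj_matrix E = (\<chi> i j. if E i j then 1 else 0)"

definition is_eigenvalue :: "real^'n^'n \<Rightarrow> real \<Rightarrow> bool" where
  "is_eigenvalue A l \<longleftrightarrow> (\<exists>x. x \<noteq> 0 \<and> A *v x = l *\<^sub>R x)"

text \<open>Smallest adjacency eigenvalue (the adjacency matrix is real symmetric,
  so all its eigenvalues are real and there are finitely many, at least one).\<close>
definition smallest_eigenvalue :: "('n::finite \<Rightarrow> 'n \<Rightarrow> bool) \<Rightarrow> real" where
  "smallest_eigenvalue E = Min {l. is_eigenvalue (adj_matrix E) l}"

definition plane_embedding ::
  "('n::finite \<Rightarrow> 'n \<Rightarrow> bool) \<Rightarrow> ('n \<Rightarrow> complex) \<Rightarrow> ('n \<Rightarrow> 'n \<Rightarrow> real \<Rightarrow> complex) \<Rightarrow> bool" where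
  "plane_embedding E pos \<gamma> \<longleftrightarrow>
     inj pos \<and>
     (\<forall>u v. E u v \<longrightarrow> arc (\<gamma> u v) \<and> pathstart (\<gamma> u v) = pos u \<and> pathfinish (\<gamma> u v) = pos v
                     \<and> path_image (\<gamma> u v) = path_image (\<gamma> v u)) \<and>
     (\<forall>u v x y. E u v \<longrightarrow> E x y \<longrightarrow> {u, v} \<noteq> {x, y} \<longrightarrow>
        path_image (\<gamma> u v) \<inter> path_image (\<gamma> x y) \<subseteq> pos ` ({u, v} \<inter> {x, y})) \<and>
     (\<forall>w u v. E u v \<longrightarrow> pos w \<in> path_image (\<gamma> u v) \<longrightarrow> w = u \<or> w = v)"

definition drawing ::
  "('n::finite \<Rightarrow> 'n \<Rightarrow> bool) \<Rightarrow> ('n \<Rightarrow> complex) \<Rightarrow> ('n \<Rightarrow> 'n \<Rightarrow> real \<Rightarrow> complex) \<Rightarrow> complex set" where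
  "drawing E pos \<gamma> = range pos \<union> (\<Union>{path_image (\<gamma> u v) | u v. E u v})"

text \<open>Faces = connected components of the complement of the drawing
  (this includes the unbounded outer face).\<close>
definition faces ::
  "('n::finite \<Rightarrow> 'n \<Rightarrow> bool) \<Rightarrow> ('n \<Rightarrow> complex) \<Rightarrow> ('n \<Rightarrow> 'n \<Rightarrow> real \<Rightarrow> complex) \<Rightarrow> complex set set" where
  "faces E pos \<gamma> = components (- drawing E pos \<gamma>)"

definition triangular_face ::
  "('n::finite \<Rightarrow> 'n \<Rightarrow> bool) \<Rightarrow> ('n \<Rightarrow> complex) \<Rightarrow> ('n \<Rightarrow> 'n \<Rightarrow> real \<Rightarrow> complex) \<Rightarrow> complex set \<Rightarrow> bool" where
  "triangular_face E pos \<gamma> F \<longleftrightarrow>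
     (\<exists>u v w. E u v \<and> E v w \<and> E w u \<and>
        frontier F = path_image (\<gamma> u v) \<union> path_image (\<gamma> v w) \<union> path_image (\<gamma> w u))"

definition plane_triangulation :: "('n::finite \<Rightarrow> 'n \<Rightarrow> bool) \<Rightarrow> bool" where
  "plane_triangulation E \<longleftrightarrow> simple_graph E \<and>
     (\<exists>pos \<gamma>. plane_embedding E pos \<gamma> \<and> (\<forall>F\<in>faces E pos \<gamma>. triangular_face E pos \<gamma> F))"

end

theory Submission
  imports Defs
begin

text \<open>Let \<T> be the set of faces of the triangulation, each a triangle of vertices. Every edge
  lies on exactly two faces and a vertex a lies on exactly deg a faces, hence for every vector x
  0 \<le> (\<Sum>T\<in>\<T>. (\<Sum>a\<in>T. x a)^2) = (\<Sum>a. deg a * (x a)^2) + 2 x\<bullet>Ax \<le> \<Delta> x\<bullet>x + 2 x\<bullet>Ax,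
  which gives \<lambda> \<ge> -\<Delta>/2. In a proper 3-colouring every face sees each colour exactly once, so
  each vertex of a k-regular triangulation has exactly k/2 neighbours in each other colour
  class, and the vector that is 1 on the first class, -1 on the second and 0 on the third is an
  eigenvector for -k/2.

  The topological input is that each edge borders exactly two faces. At least two: the two
  sides of a face boundary near an interior point of the edge. At most two: of three faces on
  an edge uv with apexes w1, w2, w3, two are bounded, and the theta graph formed by uv, u w1 v
  and u w2 v (Jordan curve theorem) shows that the region bounded by u w1 v and u w2 v is
  already exhausted by those two faces and the edge, leaving no room for the third.\<close>

section \<open>Arcs with common ends in the plane\<close>

lemma arc_image_interior_empty:
  fixes g :: "real \<Rightarrow> 'a::euclidean_space"
  assumes "arc g" and "DIM('a) \<ge> 2"
  shows "interior (path_image g) = {}"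
proof (rule ccontr)
  assume "interior (path_image g) \<noteq> {}"
  then obtain B where B: "open B" "B \<noteq> {}" "B \<subseteq> path_image g"
    by (meson interior_subset open_interior)
  have inj: "inj_on g {0..1}" and cg: "continuous_on {0..1} g"
    using assms(1) by (auto simp: arc_def path_def)
  have "continuous_on (g ` {0..1}) (the_inv_into {0..1} g)"
    by (rule continuous_on_inv_into[OF cg compact_Icc inj])
  then have "continuous_on B (the_inv_into {0..1} g)"
    using B(3) by (simp add: path_image_def continuous_on_subset)
  moreover have "inj_on (the_inv_into {0..1} g) B"
    using B(3) unfolding path_image_def
    by (metis inj inj_on_subset inj_on_the_inv_into)
  ultimately have "DIM('a) \<le> DIM(real)"
    using invariance_of_dimension B by blast
  with assms(2) show False by simp
qed

lemma interior_Union_closed_empty: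
  fixes \<C> :: "'a::topological_space set set"
  assumes "finite \<C>" and "\<And>S. S \<in> \<C> \<Longrightarrow> closed S" and "\<And>S. S \<in> \<C> \<Longrightarrow> interior S = {}"
  shows "interior (\<Union>\<C>) = {}"
  using assms
proof (induction \<C> rule: finite_induct)
  case (insert S \<C>)
  then show ?case using interior_closed_Un_empty_interior[of S "\<Union>\<C>"] by simp
qed simp

lemma closure_Union_finite:
  fixes \<C> :: "'a::topological_space set set"
  assumes "finite \<C>" shows "closure (\<Union>\<C>) = \<Union>(closure ` \<C>)"
  using assms by (induction \<C> rule: finite_induct) auto

lemma connected_subset_disjoint_open_Un:
  assumes "connected S" "open U" "open V" "U \<inter> V = {}" "S \<subseteq> U \<union> V"
  shows "S \<subseteq> U \<or> S \<subseteq> V"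
  using connectedD[OF assms(1,2,3)] assms(4,5) by blast

lemma not_connected_component_inside_outside:
  fixes S :: "'a::real_normed_vector set"
  assumes "x \<in> inside S" "y \<in> outside S"
  shows "\<not> connected_component (- S) x y"
proof
  assume "connected_component (- S) x y"
  then have "connected_component_set (- S) y = connected_component_set (- S) x"
    by (simp add: connected_component_eq)
  then show False using assms by (simp add: inside_def outside_def)
qed

definition internally_disjoint_arcs :: "(real \<Rightarrow> 'a::topological_space) \<Rightarrow> (real \<Rightarrow> 'a) \<Rightarrow> bool" where
  "internally_disjoint_arcs c1 c2 \<longleftrightarrow> arc c1 \<and> arc c2 \<and>
     pathstart c1 = pathstart c2 \<and> pathfinish c1 = pathfinish c2 \<and>
     path_image c1 \<inter> path_image c2 = {pathstart c1, pathfinish c1}"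

lemma internally_disjoint_arcs_sym:
  "internally_disjoint_arcs c1 c2 \<Longrightarrow> internally_disjoint_arcs c2 c1"
  unfolding internally_disjoint_arcs_def by (metis Int_commute)

lemma simple_loop_internally_disjoint_arcs:
  assumes "internally_disjoint_arcs c1 c2"
  shows "simple_path (c1 +++ reversepath c2)"
    and "pathfinish (c1 +++ reversepath c2) = pathstart (c1 +++ reversepath c2)"
    and "path_image (c1 +++ reversepath c2) = path_image c1 \<union> path_image c2"
proof (rule simple_path_join_loop)
  show "arc c1" "arc (reversepath c2)"
    using assms by (simp_all add: internally_disjoint_arcs_def arc_reversepath)
  show "pathfinish c1 = pathstart (reversepath c2)" "pathfinish (reversepath c2) = pathstart c1"
    using assms by (simp_all add: internally_disjoint_arcs_def)
  show "path_image c1 \<inter> path_image (reversepath c2) \<subseteq> {pathstart c1, pathstart (reversepath c2)}"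
    using assms by (simp add: internally_disjoint_arcs_def)
qed (use assms in \<open>simp_all add: internally_disjoint_arcs_def path_image_join\<close>)

lemma Jordan_internally_disjoint_arcs:
  fixes c1 c2 :: "real \<Rightarrow> complex"
  assumes "internally_disjoint_arcs c1 c2"
  defines "J \<equiv> path_image c1 \<union> path_image c2"
  shows "inside J \<noteq> {}" "open (inside J)" "connected (inside J)"
    and "open (outside J)" "connected (outside J)"
    and "inside J \<inter> outside J = {}" "inside J \<union> outside J = - J"
    and "frontier (inside J) = J" "frontier (outside J) = J" "\<not> bounded (outside J)"
  using Jordan_inside_outside[OF simple_loop_internally_disjoint_arcs(1,2)[OF assms(1)]]
  unfolding simple_loop_internally_disjoint_arcs(3)[OF assms(1)] J_def by simp_all

lemma internally_disjoint_arcs_compact: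
  "internally_disjoint_arcs c1 c2 \<Longrightarrow> compact (path_image c1) \<and> compact (path_image c2)"
  unfolding internally_disjoint_arcs_def by (simp add: arc_imp_path compact_path_image)

lemma inside_subset_outside_theta:
  fixes c1 c2 c3 :: "real \<Rightarrow> complex"
  assumes "internally_disjoint_arcs c1 c2" "internally_disjoint_arcs c1 c3"
    and "internally_disjoint_arcs c2 c3"
    and "path_image c3 \<inter> inside (path_image c1 \<union> path_image c2) = {}"
    and "path_image c2 \<inter> inside (path_image c1 \<union> path_image c3) = {}"
  shows "inside (path_image c1 \<union> path_image c2) \<subseteq> outside (path_image c1 \<union> path_image c3)"
proof -
  let ?P1 = "path_image c1" and ?P2 = "path_image c2" and ?P3 = "path_image c3"
  let ?I = "inside (?P1 \<union> ?P2)"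
  note J12 = Jordan_internally_disjoint_arcs[OF assms(1)]
  note J13 = Jordan_internally_disjoint_arcs[OF assms(2)]
  have "?I \<subseteq> inside (?P1 \<union> ?P3) \<union> outside (?P1 \<union> ?P3)"
    using J13(7) assms(4) inside_no_overlap[of "?P1 \<union> ?P2"] by blast
  then have "?I \<subseteq> inside (?P1 \<union> ?P3) \<or> ?I \<subseteq> outside (?P1 \<union> ?P3)"
    by (rule connected_subset_disjoint_open_Un[OF J12(3) J13(2,4,6)])
  moreover have "\<not> ?I \<subseteq> inside (?P1 \<union> ?P3)"
  proof
    assume "?I \<subseteq> inside (?P1 \<union> ?P3)"
    then have "closure ?I \<subseteq> closure (inside (?P1 \<union> ?P3))" by (rule closure_mono)
    moreover have "?P1 \<union> ?P2 \<subseteq> closure ?I"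
      using J12(8) frontier_def by (metis Diff_subset)
    ultimately have "?P2 \<subseteq> closure (inside (?P1 \<union> ?P3))" by blast
    also have "\<dots> = inside (?P1 \<union> ?P3) \<union> ?P1 \<union> ?P3"
      using J13(8) closure_Un_frontier[of "inside (?P1 \<union> ?P3)"] by auto
    finally have "?P2 \<subseteq> (?P1 \<inter> ?P2) \<union> (?P2 \<inter> ?P3)" using assms(5) by blast
    moreover have "?P1 \<inter> ?P2 = {pathstart c2, pathfinish c2}" "?P2 \<inter> ?P3 = {pathstart c2, pathfinish c2}"
      using assms(1,3) by (auto simp: internally_disjoint_arcs_def)
    ultimately have "?P2 - {pathstart c2, pathfinish c2} = {}" by auto
    moreover have "simple_path c2"
      using assms(1) by (simp add: internally_disjoint_arcs_def arc_imp_simple_path)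
    ultimately show False using nonempty_simple_path_endless by blast
  qed
  ultimately show ?thesis by blast
qed

text \<open>Otherwise the region bounded by the first two arcs lies outside both other loops, and
  Janiszewski's theorem joins it to infinity avoiding all three arcs.\<close>
lemma theta_arc_meets_inside:
  fixes c1 c2 c3 :: "real \<Rightarrow> complex"
  assumes "internally_disjoint_arcs c1 c2" "internally_disjoint_arcs c1 c3"
    and "internally_disjoint_arcs c2 c3"
    and "path_image c1 \<inter> inside (path_image c2 \<union> path_image c3) = {}"
    and "path_image c2 \<inter> inside (path_image c1 \<union> path_image c3) = {}"
  shows "path_image c3 \<inter> inside (path_image c1 \<union> path_image c2) \<noteq> {}"
proof
  let ?P1 = "path_image c1" and ?P2 = "path_image c2" and ?P3 = "path_image c3"
  assume h3: "?P3 \<inter> inside (?P1 \<union> ?P2) = {}"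
  have in12_out13: "inside (?P1 \<union> ?P2) \<subseteq> outside (?P1 \<union> ?P3)"
    using inside_subset_outside_theta[OF assms(1-3) h3 assms(5)] .
  have in12_out23: "inside (?P1 \<union> ?P2) \<subseteq> outside (?P2 \<union> ?P3)"
    using inside_subset_outside_theta[OF internally_disjoint_arcs_sym[OF assms(1)] assms(3,2)]
      h3 assms(4) by (simp add: Un_commute)
  obtain x where x: "x \<in> inside (?P1 \<union> ?P2)"
    using Jordan_internally_disjoint_arcs(1)[OF assms(1)] by blast
  have cpt: "compact ?P1" "compact ?P2" "compact ?P3"
    using internally_disjoint_arcs_compact assms(1,3) by blast+
  obtain y where y: "y \<in> outside (?P1 \<union> ?P2 \<union> ?P3)"
    using outside_bounded_nonempty cpt by (metis bounded_Un compact_imp_bounded ex_in_conv)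
  have joined: "connected_component (- S) x y"
    if "connected (outside S)" "x \<in> outside S" "S \<subseteq> ?P1 \<union> ?P2 \<union> ?P3" for S
  proof -
    have "y \<in> outside S" using y outside_mono[OF that(3)] by blast
    then show ?thesis
      unfolding connected_component_def using that(1,2) outside_no_overlap[of S] by blast
  qed
  have cc13: "connected_component (- (?P1 \<union> ?P3)) x y"
    using joined Jordan_internally_disjoint_arcs(5)[OF assms(2)] in12_out13 x by blast
  have cc23: "connected_component (- (?P2 \<union> ?P3)) x y"
    using joined Jordan_internally_disjoint_arcs(5)[OF assms(3)] in12_out23 x by blast
  have "(?P1 \<union> ?P3) \<inter> (?P2 \<union> ?P3) = ?P3"
    using assms(1,2) pathstart_in_path_image pathfinish_in_path_image
    unfolding internally_disjoint_arcs_def by blast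
  moreover have "connected ?P3"
    using assms(2) by (simp add: internally_disjoint_arcs_def arc_imp_path connected_path_image)
  ultimately have "connected ((?P1 \<union> ?P3) \<inter> (?P2 \<union> ?P3))" by simp
  then have "connected_component (- ((?P1 \<union> ?P3) \<union> (?P2 \<union> ?P3))) x y"
    using Janiszewski[OF _ _ _ cc13 cc23] cpt by (simp add: compact_Un compact_imp_closed)
  then have "connected_component (- (?P1 \<union> ?P2)) x y"
    by (rule connected_component_of_subset) auto
  moreover have "y \<in> outside (?P1 \<union> ?P2)" using y outside_mono[of "?P1 \<union> ?P2"] by blast
  ultimately show False using not_connected_component_inside_outside x by blast
qed

lemma inside_theta_decomposition:
  fixes c1 c2 c3 :: "real \<Rightarrow> complex"
  assumes "internally_disjoint_arcs c1 c2" "internally_disjoint_arcs c1 c3"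
    and "internally_disjoint_arcs c2 c3"
    and "path_image c1 \<inter> inside (path_image c2 \<union> path_image c3) = {}"
    and "path_image c2 \<inter> inside (path_image c1 \<union> path_image c3) = {}"
  shows "inside (path_image c1 \<union> path_image c3) \<union> inside (path_image c2 \<union> path_image c3) \<union>
           (path_image c3 - {pathstart c3, pathfinish c3}) = inside (path_image c1 \<union> path_image c2)"
proof -
  define a b where "a = pathstart c1" and "b = pathfinish c1"
  have ends: "pathstart c2 = a" "pathfinish c2 = b" "pathstart c3 = a" "pathfinish c3 = b"
    and meet: "path_image c1 \<inter> path_image c2 = {a, b}" "path_image c1 \<inter> path_image c3 = {a, b}"
      "path_image c2 \<inter> path_image c3 = {a, b}"
    and simple: "simple_path c1" "simple_path c2" "simple_path c3"
    and "a \<noteq> b"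
    using assms(1-3) arc_distinct_ends[of c1]
    by (auto simp: internally_disjoint_arcs_def arc_imp_simple_path a_def b_def)
  obtain "inside (path_image c1 \<union> path_image c3) \<union> inside (path_image c2 \<union> path_image c3) \<union>
      (path_image c3 - {a, b}) = inside (path_image c1 \<union> path_image c2)"
    by (rule split_inside_simple_closed_curve[OF simple(1) a_def[symmetric] b_def[symmetric]
          simple(2) ends(1,2) simple(3) ends(3,4) \<open>a \<noteq> b\<close> meet theta_arc_meets_inside[OF assms]])
  then show ?thesis using ends by simp
qed

section \<open>Self-adjoint operators\<close>

lemma nonneg_quadratic_imp_linear_coeff_zero:
  fixes b c :: real
  assumes "\<And>t. 0 \<le> b * t + c * t\<^sup>2"
  shows "b = 0"
proof (rule ccontr)
  assume "b \<noteq> 0"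
  define k where "k = \<bar>c\<bar> + 1"
  have k: "k > 0" "c < k" unfolding k_def by auto
  have "b * (- b / k) + c * (- b / k)\<^sup>2 = - (b\<^sup>2 / k) * ((k - c) / k)"
    using k by (simp add: field_simps power2_eq_square)
  also have "\<dots> < 0"
    using k \<open>b \<noteq> 0\<close> by (intro mult_neg_pos) auto
  finally show False using assms[of "- b / k"] by linarith
qed

lemma self_adjoint_psd_kernel:
  fixes f :: "'a::real_inner \<Rightarrow> 'a"
  assumes "linear f" and self_adjoint: "\<And>x y. x \<bullet> f y = y \<bullet> f x"
    and psd: "\<And>y. 0 \<le> y \<bullet> f y" and "x \<bullet> f x = 0"
  shows "f x = 0"
proof -
  define z where "z = f x"
  have "(x + t *\<^sub>R z) \<bullet> f (x + t *\<^sub>R z) = (2 * (z \<bullet> z)) * t + (z \<bullet> f z) * t\<^sup>2" for t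
  proof -
    have "x \<bullet> f z = z \<bullet> z" using self_adjoint[of x z] by (simp add: z_def)
    then show ?thesis
      using \<open>x \<bullet> f x = 0\<close>
      by (simp add: linear_add[OF \<open>linear f\<close>] linear_scale[OF \<open>linear f\<close>] inner_add_left
          inner_add_right z_def inner_commute power2_eq_square algebra_simps)
  qed
  then have "0 \<le> (2 * (z \<bullet> z)) * t + (z \<bullet> f z) * t\<^sup>2" for t
    using psd by metis
  then have "2 * (z \<bullet> z) = 0" by (rule nonneg_quadratic_imp_linear_coeff_zero)
  then show ?thesis by (simp add: z_def)
qed

lemma self_adjoint_finite_eigenvalues:
  fixes f :: "'a::euclidean_space \<Rightarrow> 'a"
  assumes self_adjoint: "\<And>x y. x \<bullet> f y = y \<bullet> f x"
  shows "finite {l. \<exists>x. x \<noteq> 0 \<and> f x = l *\<^sub>R x}"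
proof -
  let ?S = "{l. \<exists>x. x \<noteq> 0 \<and> f x = l *\<^sub>R x}"
  define v where "v l = (SOME x. x \<noteq> 0 \<and> f x = l *\<^sub>R x)" for l
  have v: "v l \<noteq> 0" "f (v l) = l *\<^sub>R v l" if "l \<in> ?S" for l
    using someI_ex[of "\<lambda>x. x \<noteq> 0 \<and> f x = l *\<^sub>R x"] that by (auto simp: v_def)
  have orthogonal: "v l \<bullet> v m = 0" if "l \<in> ?S" "m \<in> ?S" "l \<noteq> m" for l m
  proof -
    have "l * (v l \<bullet> v m) = m * (v l \<bullet> v m)"
      using self_adjoint[of "v m" "v l"] v that(1,2) by (simp add: inner_commute)
    then show ?thesis using that(3) by simp
  qed
  have "inj_on v ?S"
  proof (rule inj_onI)
    fix l m assume "l \<in> ?S" "m \<in> ?S" "v l = v m"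
    then have "l *\<^sub>R v l = m *\<^sub>R v l" using v(2) by metis
    then have "(l - m) *\<^sub>R v l = 0" by (simp add: scaleR_diff_left)
    then show "l = m" using v(1)[OF \<open>l \<in> ?S\<close>] by simp
  qed
  moreover have "independent (v ` ?S)"
  proof (rule pairwise_orthogonal_independent)
    show "pairwise orthogonal (v ` ?S)"
      using orthogonal by (auto simp: pairwise_def orthogonal_def)
    show "0 \<notin> v ` ?S" using v(1) by (metis (no_types, lifting) imageE)
  qed
  then have "finite (v ` ?S)" using independent_bound by blast
  ultimately show ?thesis using finite_imageD by blast
qed

lemma self_adjoint_has_eigenvalue:
  fixes f :: "'a::euclidean_space \<Rightarrow> 'a"
  assumes "linear f" and self_adjoint: "\<And>x y. x \<bullet> f y = y \<bullet> f x"
  obtains l x where "x \<noteq> 0" "f x = l *\<^sub>R x"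
proof -
  have "continuous_on (sphere 0 1) (\<lambda>x. x \<bullet> f x)"
    using \<open>linear f\<close>
    by (intro continuous_intros linear_continuous_on) (simp add: linear_conv_bounded_linear)
  moreover have "sphere (0::'a) 1 \<noteq> {}"
  proof -
    have "(SOME i. i \<in> Basis) \<in> sphere (0::'a) 1" by (simp add: SOME_Basis)
    then show ?thesis by blast
  qed
  ultimately obtain x0 where x0: "x0 \<in> sphere 0 1" and min: "\<And>y. y \<in> sphere 0 1 \<Longrightarrow> x0 \<bullet> f x0 \<le> y \<bullet> f y"
    using continuous_attains_inf[OF compact_sphere] by blast
  define m where "m = x0 \<bullet> f x0"
  define g where "g y = f y - m *\<^sub>R y" for y
  have "linear g" unfolding g_def using \<open>linear f\<close> by (intro linear_compose_sub linear_scaleR)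
  moreover have "x \<bullet> g y = y \<bullet> g x" for x y
    using self_adjoint[of x y] by (simp add: g_def inner_diff_right inner_commute)
  moreover have "0 \<le> y \<bullet> g y" for y
  proof (cases "y = 0")
    case False
    then have "y /\<^sub>R norm y \<in> sphere 0 1" by simp
    then have "m \<le> (y /\<^sub>R norm y) \<bullet> f (y /\<^sub>R norm y)" unfolding m_def by (rule min)
    also have "\<dots> = (y \<bullet> f y) / (norm y)\<^sup>2"
      using \<open>linear f\<close> by (simp add: linear_scale power2_eq_square divide_inverse)
    finally have "m * (y \<bullet> y) \<le> y \<bullet> f y"
      using False by (simp add: field_simps dot_square_norm)
    then show ?thesis by (simp add: g_def inner_diff_right)
  qed (simp add: g_def)
  moreover have "x0 \<bullet> g x0 = 0"
    using x0 by (simp add: g_def m_def inner_diff_right dot_square_norm)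
  ultimately have "g x0 = 0" by (rule self_adjoint_psd_kernel)
  moreover have "x0 \<noteq> 0" using x0 by auto
  ultimately show thesis using that[of x0 m] by (simp add: g_def)
qed

section \<open>Triangle double covers of a graph\<close>

lemma adj_matrix_quadratic_form:
  "x \<bullet> (adj_matrix E *v x) = (\<Sum>a\<in>UNIV. \<Sum>b\<in>UNIV. of_bool (E a b) * (x $ a * x $ b))"
  unfolding inner_vec_def matrix_vector_mult_def adj_matrix_def
  by (simp add: sum_distrib_left mult.left_commute of_bool_def)

locale triangle_double_cover =
  fixes E :: "'n::finite \<Rightarrow> 'n \<Rightarrow> bool" and \<T> :: "'t set" and V :: "'t \<Rightarrow> 'n set"
  assumes simple: "simple_graph E" and finite_triangles: "finite \<T>"
    and card_triangle: "\<And>t. t \<in> \<T> \<Longrightarrow> card (V t) = 3"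
    and triangle_adjacent: "\<And>t x y. t \<in> \<T> \<Longrightarrow> x \<in> V t \<Longrightarrow> y \<in> V t \<Longrightarrow> x \<noteq> y \<Longrightarrow> E x y"
    and edge_covered_twice: "\<And>u v. E u v \<Longrightarrow> card {t \<in> \<T>. u \<in> V t \<and> v \<in> V t} = 2"
begin

definition shared_triangles :: "'n \<Rightarrow> 'n \<Rightarrow> nat" where
  "shared_triangles a b = card {t \<in> \<T>. a \<in> V t \<and> b \<in> V t}"

lemma finite_triangle: "t \<in> \<T> \<Longrightarrow> finite (V t)"
  by (rule card_ge_0_finite) (simp add: card_triangle)

lemma shared_triangles_sum:
  "real (shared_triangles a b) = (\<Sum>t\<in>\<T>. of_bool (a \<in> V t \<and> b \<in> V t))"
  using finite_triangles by (simp add: shared_triangles_def Int_def)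

lemma shared_triangles_distinct:
  assumes "a \<noteq> b" shows "shared_triangles a b = 2 * of_bool (E a b)"
proof (cases "E a b")
  case False
  then have none: "{t \<in> \<T>. a \<in> V t \<and> b \<in> V t} = {}" using triangle_adjacent assms by blast
  show ?thesis unfolding shared_triangles_def none using False by simp
qed (simp add: shared_triangles_def edge_covered_twice)

text \<open>Double counting the pairs (t, b) with a, b \<in> V t and b \<noteq> a: each edge at a lies
  in two triangles, and each triangle through a contains two further vertices.\<close>
lemma shared_triangles_self: "shared_triangles a a = degree E a"
proof -
  have "(\<Sum>b\<in>UNIV. of_bool (b \<noteq> a) * real (shared_triangles a b)) = (\<Sum>b\<in>UNIV. 2 * of_bool (E a b))"
    using simple by (intro sum.cong) (auto simp: shared_triangles_distinct simple_graph_def)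
  also have "\<dots> = 2 * real (degree E a)"
    by (simp add: sum_distrib_left[symmetric] degree_def)
  finally have pairs_by_vertex:
    "(\<Sum>b\<in>UNIV. of_bool (b \<noteq> a) * real (shared_triangles a b)) = 2 * real (degree E a)" .
  have "(\<Sum>b\<in>UNIV. of_bool (b \<noteq> a) * real (shared_triangles a b))
      = (\<Sum>b\<in>UNIV. \<Sum>t\<in>\<T>. of_bool (a \<in> V t) * of_bool (b \<in> V t - {a}))"
    unfolding shared_triangles_sum sum_distrib_left by (intro sum.cong refl) auto
  also have "\<dots> = (\<Sum>t\<in>\<T>. of_bool (a \<in> V t) * (\<Sum>b\<in>UNIV. of_bool (b \<in> V t - {a})))"
    by (subst sum.swap) (simp only: sum_distrib_left)
  also have "\<dots> = (\<Sum>t\<in>\<T>. of_bool (a \<in> V t) * real (card (V t - {a})))"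
    by (simp add: Int_def set_diff_eq)
  also have "\<dots> = (\<Sum>t\<in>\<T>. 2 * of_bool (a \<in> V t))"
    by (intro sum.cong) (auto simp: card_triangle finite_triangle)
  also have "\<dots> = 2 * real (shared_triangles a a)"
    by (simp add: shared_triangles_sum sum_distrib_left)
  finally show ?thesis using pairs_by_vertex by simp
qed

lemma sum_triangle_squares:
  "(\<Sum>t\<in>\<T>. (\<Sum>a\<in>V t. x a)\<^sup>2) = (\<Sum>a\<in>UNIV. \<Sum>b\<in>UNIV. real (shared_triangles a b) * (x a * x b))"
proof -
  have "(\<Sum>a\<in>V t. x a)\<^sup>2 = (\<Sum>a\<in>UNIV. \<Sum>b\<in>UNIV. of_bool (a \<in> V t \<and> b \<in> V t) * (x a * x b))" for t
  proof -
    have "(\<Sum>a\<in>V t. x a)\<^sup>2 = (\<Sum>a\<in>V t. \<Sum>b\<in>V t. x a * x b)"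
      by (simp add: power2_eq_square sum_product)
    also have "\<dots> = (\<Sum>a\<in>UNIV. of_bool (a \<in> V t) * (\<Sum>b\<in>UNIV. of_bool (b \<in> V t) * (x a * x b)))"
      by (simp add: Int_def)
    also have "\<dots> = (\<Sum>a\<in>UNIV. \<Sum>b\<in>UNIV. of_bool (a \<in> V t \<and> b \<in> V t) * (x a * x b))"
      by (simp only: sum_distrib_left of_bool_conj mult.assoc)
    finally show ?thesis .
  qed
  then show ?thesis
    by (simp add: shared_triangles_sum sum_distrib_right sum.swap[of _ \<T>])
qed

lemma adjacency_form_lower_bound:
  fixes x :: "real ^ 'n"
  assumes degree_le: "\<And>a. real (degree E a) \<le> \<Delta>"
  shows "- (\<Delta> / 2) * (x \<bullet> x) \<le> x \<bullet> (adj_matrix E *v x)"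
proof -
  have "0 \<le> (\<Sum>t\<in>\<T>. (\<Sum>a\<in>V t. x $ a)\<^sup>2)" by (intro sum_nonneg) simp
  also have "\<dots> = (\<Sum>a\<in>UNIV. real (degree E a) * (x $ a)\<^sup>2) + 2 * (x \<bullet> (adj_matrix E *v x))"
  proof -
    have "(\<Sum>b\<in>UNIV. real (shared_triangles a b) * (x $ a * x $ b))
        = real (degree E a) * (x $ a)\<^sup>2 + 2 * (\<Sum>b\<in>UNIV. of_bool (E a b) * (x $ a * x $ b))" for a
    proof -
      have "(\<Sum>b\<in>UNIV. real (shared_triangles a b) * (x $ a * x $ b))
          = (\<Sum>b\<in>UNIV. (if b = a then real (degree E a) * (x $ a)\<^sup>2 else 0)
                        + 2 * (of_bool (E a b) * (x $ a * x $ b)))"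
        using simple by (intro sum.cong)
          (auto simp: shared_triangles_distinct shared_triangles_self simple_graph_def power2_eq_square)
      then show ?thesis
        by (simp add: sum.distrib sum_distrib_left del: sum_mult_of_bool_eq sum_of_bool_mult_eq)
    qed
    then show ?thesis
      by (simp add: sum_triangle_squares adj_matrix_quadratic_form sum.distrib sum_distrib_left)
  qed
  finally have "0 \<le> (\<Sum>a\<in>UNIV. real (degree E a) * (x $ a)\<^sup>2) + 2 * (x \<bullet> (adj_matrix E *v x))" .
  moreover have "(\<Sum>a\<in>UNIV. real (degree E a) * (x $ a)\<^sup>2) \<le> \<Delta> * (x \<bullet> x)"
    unfolding inner_vec_def sum_distrib_left
    using degree_le by (intro sum_mono) (simp add: power2_eq_square mult_right_mono)
  ultimately show ?thesis by linarith
qed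

lemma card_triangle_colour_class:
  assumes c: "proper_colouring E 3 c" and t: "t \<in> \<T>" and "j < 3"
  shows "card {u \<in> V t. c u = j} = 1"
proof -
  have inj: "inj_on c (V t)"
    using triangle_adjacent[OF t] c unfolding proper_colouring_def inj_on_def by blast
  have "c ` V t \<subseteq> {..<3}" using c unfolding proper_colouring_def by auto
  moreover have "card (c ` V t) = 3" using card_image[OF inj] card_triangle[OF t] by simp
  ultimately have "c ` V t = {..<3}" by (intro card_subset_eq) auto
  then obtain u where u: "u \<in> V t" "c u = j" using \<open>j < 3\<close> by (metis imageE lessThan_iff)
  then have "{u \<in> V t. c u = j} = {u}" using inj unfolding inj_on_def by blast
  then show ?thesis by simp
qed

text \<open>Every triangle through v has exactly one vertex of colour j, and each edge from v to
  such a vertex lies in two of these triangles.\<close>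
lemma card_coloured_neighbours:
  assumes c: "proper_colouring E 3 c" and j: "j < 3" "j \<noteq> c v"
  shows "2 * card {u. E v u \<and> c u = j} = degree E v"
proof -
  have "real (2 * card {u. E v u \<and> c u = j}) = (\<Sum>u\<in>UNIV. of_bool (c u = j) * real (shared_triangles v u))"
  proof -
    have "(\<Sum>u\<in>UNIV. of_bool (c u = j) * real (shared_triangles v u))
        = (\<Sum>u\<in>UNIV. 2 * of_bool (E v u \<and> c u = j))"
    proof (intro sum.cong refl)
      fix u
      show "of_bool (c u = j) * real (shared_triangles v u) = 2 * of_bool (E v u \<and> c u = j)"
      proof (cases "c u = j")
        case True
        then have "v \<noteq> u" using j(2) by blast
        then show ?thesis using True shared_triangles_distinct[of v u] by simp
      qed simp
    qed
    then show ?thesis by (simp add: sum_distrib_left[symmetric] Int_def)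
  qed
  also have "\<dots> = (\<Sum>t\<in>\<T>. of_bool (v \<in> V t) * real (card {u \<in> V t. c u = j}))"
    unfolding shared_triangles_sum sum_distrib_left
    by (subst sum.swap) (intro sum.cong refl, simp add: Int_def conj_commute)
  also have "\<dots> = real (shared_triangles v v)"
    using card_triangle_colour_class[OF c _ j(1)] by (simp add: shared_triangles_sum)
  finally show ?thesis by (simp add: shared_triangles_self)
qed

lemma regular_three_colouring_eigenvalue:
  assumes "regular E k" and c: "proper_colouring E 3 c" and "c u \<noteq> c w"
  shows "is_eigenvalue (adj_matrix E) (- real k / 2)"
proof -
  define x :: "real ^ 'n" where "x = (\<chi> v. of_bool (c v = 0) - of_bool (c v = 1))"
  define n where "n v j = real (card {u. E v u \<and> c u = j})" for v j
  have half: "n v j = real k / 2" if "j < 3" "j \<noteq> c v" for v j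
    using card_coloured_neighbours[OF c that] \<open>regular E k\<close>
    unfolding n_def regular_def by (metis of_nat_mult of_nat_numeral nonzero_mult_div_cancel_left
        zero_neq_numeral)
  have own: "n v (c v) = 0" for v
    using c unfolding n_def proper_colouring_def by fastforce
  have row: "(adj_matrix E *v x) $ v = n v 0 - n v 1" for v
  proof -
    have "(adj_matrix E *v x) $ v = (\<Sum>u\<in>UNIV. of_bool (E v u \<and> c u = 0) - of_bool (E v u \<and> c u = 1))"
      unfolding matrix_vector_mult_def adj_matrix_def x_def by simp (intro sum.cong refl; simp)
    then show ?thesis by (simp add: n_def sum_subtractf Int_def)
  qed
  have "adj_matrix E *v x = (- real k / 2) *\<^sub>R x"
  proof (subst vec_eq_iff, intro allI)
    fix v
    have "c v < 3" using c by (simp add: proper_colouring_def)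
    then consider "c v = 0" | "c v = 1" | "c v = 2" by linarith
    then show "(adj_matrix E *v x) $ v = ((- real k / 2) *\<^sub>R x) $ v"
      using own[of v] by cases (simp_all only: row, simp_all add: half x_def)
  qed
  moreover have "x \<noteq> 0"
  proof -
    obtain v where "c v \<noteq> 2" using \<open>c u \<noteq> c w\<close> by metis
    moreover have "c v < 3" using c by (simp add: proper_colouring_def)
    ultimately have "x $ v \<noteq> 0" by (auto simp: x_def)
    then show ?thesis by auto
  qed
  ultimately show ?thesis unfolding is_eigenvalue_def by blast
qed

end

section \<open>Plane triangulations\<close>

locale triangulated_drawing =
  fixes E :: "'n::finite \<Rightarrow> 'n \<Rightarrow> bool" and pos :: "'n \<Rightarrow> complex"
    and \<gamma> :: "'n \<Rightarrow> 'n \<Rightarrow> real \<Rightarrow> complex"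
  assumes simple: "simple_graph E" and embedding: "plane_embedding E pos \<gamma>"
    and triangular: "\<forall>F\<in>faces E pos \<gamma>. triangular_face E pos \<gamma> F"
begin

abbreviation "curve u v \<equiv> path_image (\<gamma> u v)"
abbreviation "\<D> \<equiv> drawing E pos \<gamma>"
abbreviation "\<F> \<equiv> faces E pos \<gamma>"

definition face_vertices :: "complex set \<Rightarrow> 'n set" where
  "face_vertices F = {x. pos x \<in> frontier F}"

lemma edge_sym: "E u v \<Longrightarrow> E v u"
  using simple by (simp add: simple_graph_def)

lemma edge_irrefl: "\<not> E u u"
  using simple by (simp add: simple_graph_def)

lemma arc_edge: "E u v \<Longrightarrow> arc (\<gamma> u v)"
  using embedding by (simp add: plane_embedding_def)

lemma pathstart_edge: "E u v \<Longrightarrow> pathstart (\<gamma> u v) = pos u"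
  using embedding by (simp add: plane_embedding_def)

lemma pathfinish_edge: "E u v \<Longrightarrow> pathfinish (\<gamma> u v) = pos v"
  using embedding by (simp add: plane_embedding_def)

lemma curve_sym: "E u v \<Longrightarrow> curve v u = curve u v"
  using embedding unfolding plane_embedding_def by metis

lemma curves_meet:
  "E u v \<Longrightarrow> E x y \<Longrightarrow> {u, v} \<noteq> {x, y} \<Longrightarrow> curve u v \<inter> curve x y \<subseteq> pos ` ({u, v} \<inter> {x, y})"
  using embedding unfolding plane_embedding_def by blast

lemma vertex_on_curve: "E u v \<Longrightarrow> pos w \<in> curve u v \<Longrightarrow> w = u \<or> w = v"
  using embedding unfolding plane_embedding_def by blast

lemma pos_in_curve: "E u v \<Longrightarrow> pos u \<in> curve u v" "E u v \<Longrightarrow> pos v \<in> curve u v"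
  by (metis pathstart_edge pathstart_in_path_image, metis pathfinish_edge pathfinish_in_path_image)

lemma curve_subset_drawing: "E u v \<Longrightarrow> curve u v \<subseteq> \<D>"
  unfolding drawing_def by blast

lemma drawing_eq: "\<D> = range pos \<union> (\<Union>(u, v)\<in>{(u, v). E u v}. curve u v)"
  unfolding drawing_def by auto

lemma compact_drawing: "compact \<D>"
  unfolding drawing_eq
  by (intro compact_Un compact_UN) (auto simp: arc_edge arc_imp_path compact_path_image
      intro: finite_imp_compact)

lemma interior_drawing_empty: "interior \<D> = {}"
proof -
  have "\<D> = \<Union>((\<lambda>v. {pos v}) ` UNIV \<union> (\<lambda>(u, v). curve u v) ` {(u, v). E u v})"
    unfolding drawing_eq by auto
  also have "interior \<dots> = {}"
    by (rule interior_Union_closed_empty)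
       (auto simp: arc_image_interior_empty arc_edge arc_imp_path closed_path_image)
  finally show ?thesis .
qed

lemma face_open: "F \<in> \<F> \<Longrightarrow> open F"
  unfolding faces_def using open_components[of "- \<D>" F] compact_drawing
  by (simp add: open_Compl compact_imp_closed)

lemma face_connected: "F \<in> \<F> \<Longrightarrow> connected F"
  unfolding faces_def using in_components_connected by blast

lemma face_nonempty: "F \<in> \<F> \<Longrightarrow> F \<noteq> {}"
  unfolding faces_def using in_components_nonempty by blast

lemma face_disjoint_drawing: "F \<in> \<F> \<Longrightarrow> F \<inter> \<D> = {}"
  unfolding faces_def using in_components_subset by blast

lemma faces_eq: "F \<in> \<F> \<Longrightarrow> G \<in> \<F> \<Longrightarrow> F \<inter> G \<noteq> {} \<Longrightarrow> F = G"
  unfolding faces_def using components_eq by blast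

lemma Union_faces: "\<Union>\<F> = - \<D>"
  unfolding faces_def by simp

lemma arc_two_edges:
  assumes "E u w" "E w v" "u \<noteq> v"
  shows "arc (\<gamma> u w +++ \<gamma> w v)" "pathstart (\<gamma> u w +++ \<gamma> w v) = pos u"
    and "pathfinish (\<gamma> u w +++ \<gamma> w v) = pos v"
    and "path_image (\<gamma> u w +++ \<gamma> w v) = curve u w \<union> curve w v"
proof -
  have "{u, w} \<noteq> {w, v}" using assms(3) by (auto simp: doubleton_eq_iff)
  then have "curve u w \<inter> curve w v \<subseteq> {pos w}" using curves_meet[OF assms(1,2)] assms(3) by auto
  then show "arc (\<gamma> u w +++ \<gamma> w v)"
    using assms by (intro arc_join) (auto simp: arc_edge pathstart_edge pathfinish_edge)
qed (use assms in \<open>simp_all add: path_image_join pathstart_edge pathfinish_edge\<close>)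

lemma internally_disjoint_two_edge_paths:
  assumes "E u w1" "E w1 v" "E u w2" "E w2 v" "u \<noteq> v"
    and "w1 \<noteq> w2" "w1 \<notin> {u, v}" "w2 \<notin> {u, v}"
  shows "internally_disjoint_arcs (\<gamma> u w1 +++ \<gamma> w1 v) (\<gamma> u w2 +++ \<gamma> w2 v)"
proof -
  have "curve u w1 \<inter> curve u w2 \<subseteq> {pos u}" "curve u w1 \<inter> curve w2 v = {}"
    "curve w1 v \<inter> curve u w2 = {}" "curve w1 v \<inter> curve w2 v \<subseteq> {pos v}"
    using curves_meet[OF assms(1,3)] curves_meet[OF assms(1,4)] curves_meet[OF assms(2,3)]
      curves_meet[OF assms(2,4)] assms(5-8) by (auto simp: doubleton_eq_iff)
  then show ?thesis
    using arc_two_edges[OF assms(1,2,5)] arc_two_edges[OF assms(3,4,5)]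
      pos_in_curve assms(1-4) unfolding internally_disjoint_arcs_def by auto
qed

lemma internally_disjoint_edge_and_path:
  assumes "E u w" "E w v" "E u v" "w \<notin> {u, v}"
  shows "internally_disjoint_arcs (\<gamma> u w +++ \<gamma> w v) (\<gamma> u v)"
proof -
  have uv: "u \<noteq> v" using assms(3) edge_irrefl by blast
  have "curve u v \<inter> curve u w \<subseteq> {pos u}" "curve u v \<inter> curve w v \<subseteq> {pos v}"
    using curves_meet[OF assms(3,1)] curves_meet[OF assms(3,2)] assms(4) uv
    by (auto simp: doubleton_eq_iff)
  then show ?thesis
    using arc_two_edges[OF assms(1,2) uv] arc_edge[OF assms(3)] pos_in_curve assms(1-3)
      pathstart_edge pathfinish_edge unfolding internally_disjoint_arcs_def by auto
qed

lemma face_triangle: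
  assumes "F \<in> \<F>"
  obtains a b c where "E a b" "E b c" "E c a" "frontier F = curve a b \<union> curve b c \<union> curve c a"
  using triangular assms unfolding triangular_face_def by blast

lemma face_vertices_eq:
  assumes "E a b" "E b c" "E c a" "frontier F = curve a b \<union> curve b c \<union> curve c a"
  shows "face_vertices F = {a, b, c}"
  using assms vertex_on_curve pos_in_curve unfolding face_vertices_def by blast

lemma face_boundary_arcs:
  assumes "F \<in> \<F>"
  obtains c1 c2 where "internally_disjoint_arcs c1 c2"
    and "frontier F = path_image c1 \<union> path_image c2"
proof -
  obtain a b c where abc: "E a b" "E b c" "E c a" "frontier F = curve a b \<union> curve b c \<union> curve c a"
    using face_triangle[OF assms] .
  have "c \<notin> {a, b}" using abc(2,3) edge_irrefl by blast
  then have "internally_disjoint_arcs (\<gamma> a c +++ \<gamma> c b) (\<gamma> a b)"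
    using abc(1-3) edge_sym by (intro internally_disjoint_edge_and_path) auto
  moreover have "frontier F = path_image (\<gamma> a c +++ \<gamma> c b) \<union> curve a b"
    using abc edge_sym curve_sym by (auto simp: path_image_join pathstart_edge pathfinish_edge)
  ultimately show thesis using that by blast
qed

lemma frontier_face_subset_drawing: "F \<in> \<F> \<Longrightarrow> frontier F \<subseteq> \<D>"
  by (metis face_triangle curve_subset_drawing Un_least)

lemma face_inside_or_outside:
  assumes F: "F \<in> \<F>"
  shows "F = inside (frontier F) \<or> F = outside (frontier F)"
proof -
  obtain c1 c2 where "internally_disjoint_arcs c1 c2" and fr: "frontier F = path_image c1 \<union> path_image c2"
    using face_boundary_arcs[OF F] .
  note J = Jordan_internally_disjoint_arcs[OF this(1), folded fr]
  have "F \<subseteq> inside (frontier F) \<union> outside (frontier F)"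
    using J(7) face_disjoint_drawing[OF F] frontier_face_subset_drawing[OF F] by blast
  then have side: "F \<subseteq> inside (frontier F) \<or> F \<subseteq> outside (frontier F)"
    by (rule connected_subset_disjoint_open_Un[OF face_connected[OF F] J(2,4,6)])
  have grow: "S \<subseteq> F" if "F \<subseteq> S" "connected S" "S \<inter> frontier F = {}" for S
  proof (rule ccontr)
    assume "\<not> S \<subseteq> F"
    then have "S \<inter> frontier F \<noteq> {}"
      using connected_Int_frontier[OF that(2)] that(1) face_nonempty[OF F] by blast
    with that(3) show False by blast
  qed
  show ?thesis
    using side grow[OF _ J(3)] grow[OF _ J(5)] inside_no_overlap outside_no_overlap by blast
qed

lemma bounded_face_eq_inside:
  assumes "F \<in> \<F>" "bounded F"
  shows "F = inside (frontier F)"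
proof -
  obtain c1 c2 where "internally_disjoint_arcs c1 c2" and "frontier F = path_image c1 \<union> path_image c2"
    using face_boundary_arcs[OF assms(1)] .
  then have "\<not> bounded (outside (frontier F))"
    using Jordan_internally_disjoint_arcs(10) by simp
  then show ?thesis using face_inside_or_outside[OF assms(1)] assms(2) by metis
qed

lemma finite_faces: "finite \<F>"
proof -
  let ?J = "\<lambda>(a, b, c). curve a b \<union> curve b c \<union> curve c a"
  have "\<F> \<subseteq> inside ` range ?J \<union> outside ` range ?J"
  proof
    fix F assume F: "F \<in> \<F>"
    obtain a b c where "frontier F = curve a b \<union> curve b c \<union> curve c a"
      using face_triangle[OF F] by metis
    then have "frontier F \<in> range ?J" by (intro range_eqI[of _ _ "(a, b, c)"]) simp
    then have "inside (frontier F) \<in> inside ` range ?J" "outside (frontier F) \<in> outside ` range ?J"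
      by (rule imageI)+
    with face_inside_or_outside[OF F] show "F \<in> inside ` range ?J \<union> outside ` range ?J"
      by (elim disjE) simp_all
  qed
  then show ?thesis by (rule finite_subset) auto
qed

lemma curve_interior_point:
  assumes "E u v"
  obtains p where "p \<in> curve u v" "p \<notin> range pos"
proof -
  obtain p where p: "p \<in> curve u v - {pos u, pos v}"
    using nonempty_simple_path_endless[OF arc_imp_simple_path[OF arc_edge[OF assms]]]
    by (auto simp: pathstart_edge[OF assms] pathfinish_edge[OF assms])
  then have "p \<notin> range pos" using vertex_on_curve[OF assms] by blast
  with p that show thesis by blast
qed

lemma face_vertices_adjacent:
  assumes "F \<in> \<F>" "x \<in> face_vertices F" "y \<in> face_vertices F" "x \<noteq> y"
  shows "E x y"
proof -
  obtain a b c where "E a b" "E b c" "E c a" "frontier F = curve a b \<union> curve b c \<union> curve c a"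
    using face_triangle[OF assms(1)] .
  then show ?thesis using face_vertices_eq assms(2-4) edge_sym by auto
qed

lemma edge_at_frontier_point:
  assumes F: "F \<in> \<F>" and uv: "E u v" and p: "p \<in> curve u v" "p \<notin> range pos" "p \<in> frontier F"
  shows "u \<in> face_vertices F \<and> v \<in> face_vertices F"
proof -
  obtain a b c where abc: "E a b" "E b c" "E c a" "frontier F = curve a b \<union> curve b c \<union> curve c a"
    using face_triangle[OF F] .
  have "{u, v} = {x, y}" if "E x y" "p \<in> curve x y" for x y
    using curves_meet[OF uv that(1)] p(1,2) that(2) by blast
  then have "{u, v} \<subseteq> {a, b, c}"
    using p(3) abc by (auto simp: doubleton_eq_iff)
  then show ?thesis using face_vertices_eq[OF abc] by blast
qed

lemma face_near_closure_point:
  assumes "open U" "p \<in> closure U"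
  obtains F where "F \<in> \<F>" "F \<inter> U \<noteq> {}" "p \<in> closure F"
proof -
  have "U \<subseteq> closure (U \<inter> - \<D>)"
    using open_Int_closure_subset[OF assms(1), of "- \<D>"]
    by (simp add: closure_complement interior_drawing_empty)
  then have "p \<in> closure (U \<inter> - \<D>)"
    using assms(2) closure_minimal closed_closure by blast
  also have "U \<inter> - \<D> = \<Union>((\<lambda>F. U \<inter> F) ` \<F>)"
    using Union_faces by blast
  also have "closure \<dots> = \<Union>(closure ` (\<lambda>F. U \<inter> F) ` \<F>)"
    by (rule closure_Union_finite) (simp add: finite_faces)
  finally obtain F where "F \<in> \<F>" "p \<in> closure (U \<inter> F)" by blast
  moreover from this(2) have "U \<inter> F \<noteq> {}" "p \<in> closure F"
    using closure_mono[of "U \<inter> F" F] by auto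
  ultimately show thesis using that by blast
qed

lemma closure_face_frontier: "F \<in> \<F> \<Longrightarrow> p \<in> closure F \<Longrightarrow> p \<in> \<D> \<Longrightarrow> p \<in> frontier F"
  using face_disjoint_drawing face_open by (auto simp: frontier_def interior_open)

lemma face_opposite_side:
  assumes "F \<in> \<F>"
  obtains U where "open U" "U \<inter> F = {}" "frontier U = frontier F"
proof -
  obtain c1 c2 where "internally_disjoint_arcs c1 c2" and fr: "frontier F = path_image c1 \<union> path_image c2"
    using face_boundary_arcs[OF assms] .
  note J = Jordan_internally_disjoint_arcs[OF this(1), folded fr]
  show thesis
  proof (cases "F = inside (frontier F)")
    case True
    then have "outside (frontier F) \<inter> F = {}" using J(6) by blast
    with J(4,9) show thesis using that by blast
  next
    case False
    then have "F = outside (frontier F)" using face_inside_or_outside[OF assms] by blast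
    then have "inside (frontier F) \<inter> F = {}" using J(6) by blast
    with J(2,8) show thesis using that by blast
  qed
qed

lemma edge_in_two_faces:
  assumes uv: "E u v"
  obtains F G where "F \<in> \<F>" "G \<in> \<F>" "F \<noteq> G"
    and "u \<in> face_vertices F" "v \<in> face_vertices F" "u \<in> face_vertices G" "v \<in> face_vertices G"
proof -
  obtain p where p: "p \<in> curve u v" "p \<notin> range pos" using curve_interior_point[OF uv] .
  have pD: "p \<in> \<D>" using p curve_subset_drawing[OF uv] by blast
  obtain F where F: "F \<in> \<F>" "p \<in> closure F"
    using face_near_closure_point[of UNIV p] by auto
  have pF: "p \<in> frontier F" using closure_face_frontier F pD by blast
  obtain U where U: "open U" "U \<inter> F = {}" "frontier U = frontier F"
    using face_opposite_side[OF F(1)] .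
  have "p \<in> closure U" using U(3) pF by (metis frontier_def Diff_iff)
  then obtain G where G: "G \<in> \<F>" "G \<inter> U \<noteq> {}" "p \<in> closure G"
    using face_near_closure_point[OF U(1)] by blast
  have "F \<noteq> G" using G(2) U(2) by blast
  moreover have "p \<in> frontier G" using closure_face_frontier G pD by blast
  ultimately show thesis
    using that edge_at_frontier_point[OF F(1) uv p pF] edge_at_frontier_point[OF G(1) uv p] F(1) G(1)
    by blast
qed

lemma face_apex:
  assumes F: "F \<in> \<F>" and uv: "u \<in> face_vertices F" "v \<in> face_vertices F" "u \<noteq> v"
  obtains w where "w \<notin> {u, v}" "E u w" "E w v"
    and "frontier F = curve u v \<union> curve u w \<union> curve w v"
proof -
  obtain a b c where abc: "E a b" "E b c" "E c a" "frontier F = curve a b \<union> curve b c \<union> curve c a"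
    using face_triangle[OF F] .
  have t: "face_vertices F = {a, b, c}" by (rule face_vertices_eq[OF abc])
  define w where "w = (if a \<notin> {u, v} then a else if b \<notin> {u, v} then b else c)"
  have distinct: "a \<noteq> b" "b \<noteq> c" "c \<noteq> a" using abc(1-3) edge_irrefl by metis+
  then have uvw: "{a, b, c} = {u, v, w}" "w \<notin> {u, v}"
    using uv t unfolding w_def by auto
  have E3: "E u w" "E w v"
    using face_vertices_adjacent[OF F] uv t uvw by auto
  have "frontier F = (\<Union>x\<in>{a, b, c}. \<Union>y\<in>{a, b, c} - {x}. curve x y)"
    using abc distinct curve_sym by auto
  also have "\<dots> = curve u v \<union> curve u w \<union> curve w v"
    unfolding uvw(1) using uvw(2) uv(3) curve_sym E3 edge_sym face_vertices_adjacent[OF F] uv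
    by auto
  finally show thesis using that uvw E3 by blast
qed

lemma faces_eq_pair_if_same_frontier:
  assumes "F1 \<in> \<F>" "F2 \<in> \<F>" "F1 \<noteq> F2" "frontier F1 = frontier F2"
  shows "\<F> = {F1, F2}"
proof -
  obtain c1 c2 where "internally_disjoint_arcs c1 c2" and fr: "frontier F1 = path_image c1 \<union> path_image c2"
    using face_boundary_arcs[OF assms(1)] .
  note J = Jordan_internally_disjoint_arcs[OF this(1), folded fr]
  have "F1 \<union> F2 = inside (frontier F1) \<union> outside (frontier F1)"
    using face_inside_or_outside[OF assms(1)] face_inside_or_outside[OF assms(2)] assms(3,4)
    by (metis Un_commute)
  then have cover: "F1 \<union> F2 = - frontier F1" using J(7) by simp
  have "F = F1 \<or> F = F2" if F: "F \<in> \<F>" for F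
  proof -
    have "F \<subseteq> - frontier F1"
      using face_disjoint_drawing[OF F] frontier_face_subset_drawing[OF assms(1)] by blast
    then have "F \<inter> F1 \<noteq> {} \<or> F \<inter> F2 \<noteq> {}" using cover face_nonempty[OF F] by blast
    then show ?thesis using faces_eq F assms(1,2) by blast
  qed
  then show ?thesis using assms(1,2) by blast
qed

lemma unbounded_face_unique:
  assumes "F \<in> \<F>" "G \<in> \<F>" "\<not> bounded F" "\<not> bounded G"
  shows "F = G"
  using assms compact_drawing unfolding faces_def
  by (metis cobounded_unique_unbounded_components compact_imp_bounded double_complement
      DIM_complex order_refl)

lemma bounded_faces_at_edge_fill_region:
  assumes uv: "E u v" and F: "F1 \<in> \<F>" "F2 \<in> \<F>" "bounded F1" "bounded F2"
    and w1: "w1 \<notin> {u, v}" "E u w1" "E w1 v" and fr1: "frontier F1 = curve u v \<union> curve u w1 \<union> curve w1 v"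
    and w2: "w2 \<notin> {u, v}" "E u w2" "E w2 v" and fr2: "frontier F2 = curve u v \<union> curve u w2 \<union> curve w2 v"
    and "w1 \<noteq> w2"
  shows "F1 \<union> F2 \<union> (curve u v - {pos u, pos v}) = inside ((curve u w1 \<union> curve w1 v) \<union> (curve u w2 \<union> curve w2 v))"
proof -
  have "u \<noteq> v" using uv edge_irrefl by blast
  define b1 b2 where "b1 = \<gamma> u w1 +++ \<gamma> w1 v" and "b2 = \<gamma> u w2 +++ \<gamma> w2 v"
  have img: "path_image b1 = curve u w1 \<union> curve w1 v" "path_image b2 = curve u w2 \<union> curve w2 v"
    using arc_two_edges(4) w1 w2 \<open>u \<noteq> v\<close> by (simp_all add: b1_def b2_def)
  have in1: "F1 = inside (path_image b1 \<union> curve u v)"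
    using bounded_face_eq_inside[OF F(1,3)] fr1 img by (simp add: Un_ac)
  have in2: "F2 = inside (path_image b2 \<union> curve u v)"
    using bounded_face_eq_inside[OF F(2,4)] fr2 img by (simp add: Un_ac)
  have drawn: "path_image b1 \<subseteq> \<D>" "path_image b2 \<subseteq> \<D>"
    using img curve_subset_drawing w1 w2 by auto
  have "internally_disjoint_arcs b1 b2"
    unfolding b1_def b2_def using w1 w2 \<open>w1 \<noteq> w2\<close> \<open>u \<noteq> v\<close>
    by (intro internally_disjoint_two_edge_paths) auto
  moreover have "internally_disjoint_arcs b1 (\<gamma> u v)" "internally_disjoint_arcs b2 (\<gamma> u v)"
    unfolding b1_def b2_def using w1 w2 uv by (simp_all add: internally_disjoint_edge_and_path)
  moreover have "path_image b1 \<inter> inside (path_image b2 \<union> curve u v) = {}"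
    "path_image b2 \<inter> inside (path_image b1 \<union> curve u v) = {}"
    using in1 in2 face_disjoint_drawing F(1,2) drawn by auto
  ultimately show ?thesis
    using inside_theta_decomposition[of b1 b2 "\<gamma> u v"] in1 in2 img
    by (simp add: pathstart_edge[OF uv] pathfinish_edge[OF uv])
qed

lemma no_third_face_at_edge_of_bounded_faces:
  assumes uv: "E u v" and F: "F1 \<in> \<F>" "F2 \<in> \<F>" "F3 \<in> \<F>" "F3 \<noteq> F1" "F3 \<noteq> F2"
    and "F1 \<noteq> F2" "bounded F1" "bounded F2"
    and at_edge: "\<forall>F\<in>{F1, F2, F3}. u \<in> face_vertices F \<and> v \<in> face_vertices F"
  shows False
proof -
  have "u \<noteq> v" using uv edge_irrefl by blast
  obtain w1 where w1: "w1 \<notin> {u, v}" "E u w1" "E w1 v"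
    and fr1: "frontier F1 = curve u v \<union> curve u w1 \<union> curve w1 v"
    using face_apex[OF F(1) _ _ \<open>u \<noteq> v\<close>] at_edge by blast
  obtain w2 where w2: "w2 \<notin> {u, v}" "E u w2" "E w2 v"
    and fr2: "frontier F2 = curve u v \<union> curve u w2 \<union> curve w2 v"
    using face_apex[OF F(2) _ _ \<open>u \<noteq> v\<close>] at_edge by blast
  obtain w3 where "frontier F3 = curve u v \<union> curve u w3 \<union> curve w3 v"
    using face_apex[OF F(3) _ _ \<open>u \<noteq> v\<close>] at_edge by blast
  then have fr3: "curve u v \<subseteq> frontier F3" by blast
  have "w1 \<noteq> w2"
    using faces_eq_pair_if_same_frontier[OF F(1,2) \<open>F1 \<noteq> F2\<close>] fr1 fr2 F(3-5) by auto
  define R where "R = inside ((curve u w1 \<union> curve w1 v) \<union> (curve u w2 \<union> curve w2 v))"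
  have fill: "F1 \<union> F2 \<union> (curve u v - {pos u, pos v}) = R"
    unfolding R_def using bounded_faces_at_edge_fill_region[OF uv F(1,2) \<open>bounded F1\<close> \<open>bounded F2\<close>
        w1 fr1 w2 fr2 \<open>w1 \<noteq> w2\<close>] .
  obtain p where p: "p \<in> curve u v" "p \<notin> range pos"
    using curve_interior_point[OF uv] .
  then have "p \<in> R" using fill by blast
  moreover have "open R"
    unfolding R_def using w1 w2
    by (intro open_inside) (auto intro!: closed_Un closed_path_image arc_imp_path arc_edge)
  moreover have "p \<in> closure F3" using fr3 p(1) frontier_def by (metis Diff_iff subsetD)
  ultimately have "R \<inter> F3 \<noteq> {}"
    using open_Int_closure_eq_empty by blast
  then have "F3 \<inter> F1 \<noteq> {} \<or> F3 \<inter> F2 \<noteq> {}"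
    using fill face_disjoint_drawing[OF F(3)] curve_subset_drawing[OF uv] by blast
  then show False using faces_eq F by blast
qed

lemma card_faces_at_edge:
  assumes uv: "E u v"
  shows "card {F \<in> \<F>. u \<in> face_vertices F \<and> v \<in> face_vertices F} = 2"
proof -
  let ?S = "{F \<in> \<F>. u \<in> face_vertices F \<and> v \<in> face_vertices F}"
  obtain F G where FG: "F \<in> ?S" "G \<in> ?S" "F \<noteq> G"
    using edge_in_two_faces[OF uv] by (metis (mono_tags, lifting) mem_Collect_eq)
  have "H \<in> {F, G}" if H: "H \<in> ?S" for H
  proof (rule ccontr)
    assume "H \<notin> {F, G}"
    have faces: "F \<in> \<F>" "G \<in> \<F>" "H \<in> \<F>" using FG H by auto
    have at_edge: "\<forall>X\<in>{F, G, H}. u \<in> face_vertices X \<and> v \<in> face_vertices X"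
      using FG H by auto
    consider "bounded F" "bounded G" | "bounded F" "bounded H" | "bounded G" "bounded H"
      using unbounded_face_unique faces FG(3) \<open>H \<notin> {F, G}\<close> by blast
    then show False
    proof cases
      case 1
      then show False using no_third_face_at_edge_of_bounded_faces[OF uv faces(1,2,3)]
        \<open>H \<notin> {F, G}\<close> FG(3) at_edge by auto
    next
      case 2
      then show False using no_third_face_at_edge_of_bounded_faces[OF uv faces(1,3,2)]
        \<open>H \<notin> {F, G}\<close> FG(3) at_edge by auto
    next
      case 3
      then show False using no_third_face_at_edge_of_bounded_faces[OF uv faces(2,3,1)]
        \<open>H \<notin> {F, G}\<close> FG(3) at_edge by auto
    qed
  qed
  then have "?S = {F, G}" using FG by blast
  then show ?thesis using FG(3) by simp
qed

lemma card_face_vertices: "F \<in> \<F> \<Longrightarrow> card (face_vertices F) = 3"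
  by (metis face_triangle face_vertices_eq edge_irrefl card_3_iff)

end

section \<open>The smallest adjacency eigenvalue\<close>

lemma adj_matrix_self_adjoint:
  assumes "simple_graph E"
  shows "x \<bullet> (adj_matrix E *v y) = y \<bullet> (adj_matrix E *v x)"
proof -
  have "transpose (adj_matrix E) = adj_matrix E"
    using assms by (auto simp: vec_eq_iff transpose_def adj_matrix_def simple_graph_def)
  then have "(adj_matrix E *v x) \<bullet> y = x \<bullet> (adj_matrix E *v y)"
    by (metis dot_lmul_matrix transpose_matrix_vector)
  then show ?thesis by (simp add: inner_commute)
qed

lemma eigenvalue_ge_if_form_ge:
  fixes A :: "real ^ 'n ^ 'n"
  assumes "is_eigenvalue A l" and "\<And>x. c * (x \<bullet> x) \<le> x \<bullet> (A *v x)"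
  shows "c \<le> l"
proof -
  obtain x where "x \<noteq> 0" "A *v x = l *\<^sub>R x" using assms(1) unfolding is_eigenvalue_def by blast
  then have "c * (x \<bullet> x) \<le> l * (x \<bullet> x)" using assms(2)[of x] by simp
  then show ?thesis using \<open>x \<noteq> 0\<close> by (simp add: mult_le_cancel_right)
qed

lemma adj_eigenvalues_finite_nonempty:
  assumes "simple_graph E"
  shows "finite {l. is_eigenvalue (adj_matrix E) l}" "{l. is_eigenvalue (adj_matrix E) l} \<noteq> {}"
proof -
  have self_adjoint: "x \<bullet> (adj_matrix E *v y) = y \<bullet> (adj_matrix E *v x)" for x y
    using adj_matrix_self_adjoint[OF assms] .
  show "finite {l. is_eigenvalue (adj_matrix E) l}"
    using self_adjoint_finite_eigenvalues[OF self_adjoint] by (simp add: is_eigenvalue_def)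
  obtain l x where "x \<noteq> 0" "adj_matrix E *v x = l *\<^sub>R x"
    using self_adjoint_has_eigenvalue[OF matrix_vector_mul_linear self_adjoint] .
  then show "{l. is_eigenvalue (adj_matrix E) l} \<noteq> {}" unfolding is_eigenvalue_def by blast
qed

lemma smallest_eigenvalue_ge:
  assumes "simple_graph E" and "\<And>x. c * (x \<bullet> x) \<le> x \<bullet> (adj_matrix E *v x)"
  shows "c \<le> smallest_eigenvalue E"
  using adj_eigenvalues_finite_nonempty[OF assms(1)] eigenvalue_ge_if_form_ge[OF _ assms(2)]
  by (simp add: smallest_eigenvalue_def)

lemma smallest_eigenvalue_eqI:
  assumes "simple_graph E" and "\<And>x. c * (x \<bullet> x) \<le> x \<bullet> (adj_matrix E *v x)"
    and "is_eigenvalue (adj_matrix E) c"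
  shows "smallest_eigenvalue E = c"
  unfolding smallest_eigenvalue_def
  using adj_eigenvalues_finite_nonempty[OF assms(1)] eigenvalue_ge_if_form_ge[OF _ assms(2)] assms(3)
  by (intro Min_eqI) auto

lemma degree_le_max_degree: "degree E a \<le> max_degree E"
  unfolding max_degree_def by (rule Max_ge) auto

lemma chromatic_number_colouring:
  fixes E :: "'n::finite \<Rightarrow> 'n \<Rightarrow> bool"
  assumes "simple_graph E"
  obtains c where "proper_colouring E (chromatic_number E) c"
proof -
  obtain h where h: "bij_betw h (UNIV :: 'n set) {..<CARD('n)}"
    using ex_bij_betw_finite_nat[of "UNIV :: 'n set"] by (auto simp: atLeast0LessThan)
  have "proper_colouring E CARD('n) h"
    unfolding proper_colouring_def
  proof (intro conjI allI impI)
    show "h v < CARD('n)" for v using h by (auto simp: bij_betw_def)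
    show "h u \<noteq> h v" if "E u v" for u v
      using that assms h by (metis bij_betw_imp_inj_on injD simple_graph_def)
  qed
  then have "\<exists>c. proper_colouring E (chromatic_number E) c"
    unfolding chromatic_number_def using LeastI_ex[of "\<lambda>k. \<exists>c. proper_colouring E k c"] by blast
  with that show thesis by blast
qed

lemma proper_colouring_nonconstant:
  assumes "1 < chromatic_number E" and "proper_colouring E k c"
  obtains u w where "c u \<noteq> c w"
proof -
  have "\<exists>u w. c u \<noteq> c w"
  proof (rule ccontr)
    assume "\<nexists>u w. c u \<noteq> c w"
    then have "proper_colouring E 1 (\<lambda>_. 0)"
      using assms(2) unfolding proper_colouring_def by auto
    then have "chromatic_number E \<le> 1"
      unfolding chromatic_number_def by (blast intro: Least_le)
    with assms(1) show False by simp
  qed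
  with that show thesis by blast
qed

sublocale triangulated_drawing \<subseteq> cover: triangle_double_cover E "faces E pos \<gamma>" face_vertices
  using simple finite_faces card_face_vertices face_vertices_adjacent card_faces_at_edge
  by unfold_locales

theorem mainTheorem16:
  fixes E :: "'n::finite \<Rightarrow> 'n \<Rightarrow> bool" and k :: nat
  assumes "plane_triangulation E"
  shows "smallest_eigenvalue E \<ge> - real (max_degree E) / 2 \<and>
         (regular E k \<and> chromatic_number E = 3 \<longrightarrow> smallest_eigenvalue E = - real k / 2)"
proof
  obtain pos \<gamma> where "triangulated_drawing E pos \<gamma>"
    using assms unfolding plane_triangulation_def triangulated_drawing_def by blast
  then interpret triangulated_drawing E pos \<gamma> .
  have "- (real (max_degree E) / 2) * (x \<bullet> x) \<le> x \<bullet> (adj_matrix E *v x)" for x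
    using degree_le_max_degree by (intro cover.adjacency_form_lower_bound) simp
  then show "smallest_eigenvalue E \<ge> - real (max_degree E) / 2"
    using smallest_eigenvalue_ge[OF simple] by simp
  show "regular E k \<and> chromatic_number E = 3 \<longrightarrow> smallest_eigenvalue E = - real k / 2"
  proof
    assume "regular E k \<and> chromatic_number E = 3"
    then have k: "regular E k" and \<chi>: "chromatic_number E = 3" by simp_all
    obtain c where c: "proper_colouring E 3 c" using chromatic_number_colouring[OF simple] \<chi> by metis
    have "1 < chromatic_number E" using \<chi> by simp
    then obtain u w where "c u \<noteq> c w" using proper_colouring_nonconstant[OF _ c] by blast
    have "- (real k / 2) * (x \<bullet> x) \<le> x \<bullet> (adj_matrix E *v x)" for x
      using cover.adjacency_form_lower_bound k by (simp add: regular_def)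
    then show "smallest_eigenvalue E = - real k / 2"
      using smallest_eigenvalue_eqI[OF simple] cover.regular_three_colouring_eigenvalue[OF k c \<open>c u \<noteq> c w\<close>]
      by simp
  qed
qed

end
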